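(* Let $(E,A)$ satisfy the standing assumptions below and set $p:=p_{\mathrm{res}}^{(E,A)}+1$. For every $x_0\in X_{\operatorname{ran}}$ and $z_0\in Z_{\operatorname{ran}}$ the mappings $t\mapsto S_r(t)x_0$ and $t\mapsto S_l(t)z_0$ are continuous.
   Context: Standing assumptions: $X$, $Z$ complex Banach spaces; $E\in L(X,Z)$; $A\colon\mathrm{dom}(A)\subseteq X\to Z$ closed and densely defined; $(E,A)$ has a complex resolvent index $p_{\mathrm{res}}^{(E,A)}$, i.e.~the smallest $n\in\mathbb N_0$ with $\mathbb C_{\operatorname{Re}>\omega}\subseteq\rho(E,A)$ and $\Vert(\lambda E-A)^{-1}\Vert\le C|\lambda|^{n-1}$ on $\mathbb C_{\operatorname{Re}>\omega}$ for some $\omega\in\mathbb R$, $C>0$. With $R_r(\lambda)=(\lambda E-A)^{-1}E$, $R_l(\lambda)=E(\lambda E-A)^{-1}$, set $X_{\operatorname{ran}}=\overline{\operatorname{ran}R_r(\lambda)^p}$, $Z_{\operatorname{ran}}=\overline{\operatorname{ran}R_l(\lambda)^p}$ (ranges' closures, independent of $\lambda\in\rho(E,A)$). $(S_r(t))_{t\ge0}$ on $X_{\operatorname{ran}}$ and $(S_l(t))_{t\ge0}$ on $Z_{\operatorname{ran}}$ are the $p$-times integrated semigroups of $(E,A)$: exponentially bounded families ($\Vert S_r(t)\Vert,\Vert S_l(t)\Vert\le C\mathrm e^{\omega t}$) with $R_r(\lambda)x=\lambda^p\int_0^\infty \mathrm e^{-\lambda t}S_r(t)x\,\mathrm dt$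 for $x\in X_{\operatorname{ran}}$ and $R_l(\lambda)z=\lambda^p\int_0^\infty \mathrm e^{-\lambda t}S_l(t)z\,\mathrm dt$ for $z\in Z_{\operatorname{ran}}$, $\operatorname{Re}\lambda>\omega$; for $x_0\in\operatorname{ran}R_r(\mu)^p$, $S_r(t)x_0$ is the $p$-fold iterated integral of the mild solution of $\frac{\mathrm d}{\mathrm dt}Ex=Ax$, $x(0)=x_0$ (and $S_l$ is obtained analogously from the pair $(E(\mu E-A)^{-1},A(\mu E-A)^{-1})$). *)

theory Defs
  imports "HOL-Analysis.Analysis"
begin

class complex_banach = banach +
  fixes scaleC :: "complex \<Rightarrow> 'a \<Rightarrow> 'a"
  assumes scaleC_add_right: "scaleC c (x + y) = scaleC c x + scaleC c y"
    and scaleC_add_left: "scaleC (b + c) x = scaleC b x + scaleC c x"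
    and scaleC_scaleC: "scaleC b (scaleC c x) = scaleC (b * c) x"
    and scaleC_of_real: "scaleC (of_real r) x = r *\<^sub>R x"
    and norm_scaleC: "norm (scaleC c x) = cmod c * norm x"

definition csubspace :: "'a::complex_banach set \<Rightarrow> bool" where
  "csubspace V \<longleftrightarrow> 0 \<in> V \<and> (\<forall>x\<in>V. \<forall>y\<in>V. x + y \<in> V) \<and> (\<forall>c. \<forall>x\<in>V. scaleC c x \<in> V)"

definition clinear_on :: "'a::complex_banach set \<Rightarrow> ('a \<Rightarrow> 'b::complex_banach) \<Rightarrow> bool" where
  "clinear_on V f \<longleftrightarrow> (\<forall>x\<in>V. \<forall>y\<in>V. f (x + y) = f x + f y) \<and>
      (\<forall>c. \<forall>x\<in>V. f (scaleC c x) = scaleC c (f x))"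

definition standing_op :: "('x::complex_banach \<Rightarrow> 'z::complex_banach) \<Rightarrow> ('x \<Rightarrow> 'z) \<Rightarrow> 'x set \<Rightarrow> bool" where
  "standing_op E A D \<longleftrightarrow> bounded_linear E \<and> (\<forall>c x. E (scaleC c x) = scaleC c (E x)) \<and>
     csubspace D \<and> clinear_on D A \<and> closed {(x, A x) | x. x \<in> D} \<and> closure D = UNIV"

definition in_resolvent :: "('x::complex_banach \<Rightarrow> 'z::complex_banach) \<Rightarrow> ('x \<Rightarrow> 'z) \<Rightarrow> 'x set \<Rightarrow> complex \<Rightarrow> bool" where
  "in_resolvent E A D l \<longleftrightarrow> bij_betw (\<lambda>x. scaleC l (E x) - A x) D UNIV \<and>
      bounded_linear (inv_into D (\<lambda>x. scaleC l (E x) - A x))"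

definition res_op :: "('x::complex_banach \<Rightarrow> 'z::complex_banach) \<Rightarrow> ('x \<Rightarrow> 'z) \<Rightarrow> 'x set \<Rightarrow> complex \<Rightarrow> 'z \<Rightarrow> 'x" where
  "res_op E A D l = inv_into D (\<lambda>x. scaleC l (E x) - A x)"

definition res_index_ok :: "('x::complex_banach \<Rightarrow> 'z::complex_banach) \<Rightarrow> ('x \<Rightarrow> 'z) \<Rightarrow> 'x set \<Rightarrow> nat \<Rightarrow> bool" where
  "res_index_ok E A D n \<longleftrightarrow> (\<exists>\<omega>::real. \<exists>C::real. C > 0 \<and>
      (\<forall>l. Re l > \<omega> \<longrightarrow> in_resolvent E A D l \<and>
             onorm (res_op E A D l) \<le> C * cmod l powi (int n - 1)))"

definition has_res_index :: "('x::complex_banach \<Rightarrow> 'z::complex_banach) \<Rightarrow> ('x \<Rightarrow> 'z) \<Rightarrow> 'x set \<Rightarrow> bool" where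
  "has_res_index E A D \<longleftrightarrow> (\<exists>n. res_index_ok E A D n)"

definition p_res :: "('x::complex_banach \<Rightarrow> 'z::complex_banach) \<Rightarrow> ('x \<Rightarrow> 'z) \<Rightarrow> 'x set \<Rightarrow> nat" where
  "p_res E A D = (LEAST n. res_index_ok E A D n)"

definition Rr :: "('x::complex_banach \<Rightarrow> 'z::complex_banach) \<Rightarrow> ('x \<Rightarrow> 'z) \<Rightarrow> 'x set \<Rightarrow> complex \<Rightarrow> 'x \<Rightarrow> 'x" where
  "Rr E A D l = res_op E A D l \<circ> E"

definition Rl :: "('x::complex_banach \<Rightarrow> 'z::complex_banach) \<Rightarrow> ('x \<Rightarrow> 'z) \<Rightarrow> 'x set \<Rightarrow> complex \<Rightarrow> 'z \<Rightarrow> 'z" where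
  "Rl E A D l = E \<circ> res_op E A D l"

definition Xran :: "('x::complex_banach \<Rightarrow> 'z::complex_banach) \<Rightarrow> ('x \<Rightarrow> 'z) \<Rightarrow> 'x set \<Rightarrow> complex \<Rightarrow> nat \<Rightarrow> 'x set" where
  "Xran E A D \<mu> p = closure (range ((Rr E A D \<mu>) ^^ p))"

definition Zran :: "('x::complex_banach \<Rightarrow> 'z::complex_banach) \<Rightarrow> ('x \<Rightarrow> 'z) \<Rightarrow> 'x set \<Rightarrow> complex \<Rightarrow> nat \<Rightarrow> 'z set" where
  "Zran E A D \<mu> p = closure (range ((Rl E A D \<mu>) ^^ p))"

text \<open>x is a mild solution of d/dt E x = A x, x(0) = x0.\<close>
definition mild_solution :: "('x::complex_banach \<Rightarrow> 'z::complex_banach) \<Rightarrow> ('x \<Rightarrow> 'z) \<Rightarrow> 'x set \<Rightarrow> 'x \<Rightarrow> (real \<Rightarrow> 'x) \<Rightarrow> bool" where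
  "mild_solution E A D x0 x \<longleftrightarrow> continuous_on {0..} x \<and>
     (\<forall>t\<ge>0. integral {0..t} x \<in> D \<and> E (x t) - E x0 = A (integral {0..t} x))"

fun iter_int :: "nat \<Rightarrow> (real \<Rightarrow> 'a::banach) \<Rightarrow> real \<Rightarrow> 'a" where
  "iter_int 0 f = f"
| "iter_int (Suc n) f = (\<lambda>t. integral {0..t} (iter_int n f))"

definition exp_bounded_laplace ::
  "'x::complex_banach set \<Rightarrow> (complex \<Rightarrow> bool) \<Rightarrow> (complex \<Rightarrow> 'x \<Rightarrow> 'x) \<Rightarrow> nat \<Rightarrow> (real \<Rightarrow> 'x \<Rightarrow> 'x) \<Rightarrow> bool" where
  "exp_bounded_laplace V inres R p S \<longleftrightarrow> (\<exists>C::real. \<exists>\<omega>::real. C > 0 \<and>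
     (\<forall>t\<ge>0. (\<forall>x\<in>V. S t x \<in> V) \<and> clinear_on V (S t) \<and>
            (\<forall>x\<in>V. norm (S t x) \<le> C * exp (\<omega> * t) * norm x)) \<and>
     (\<forall>l. Re l > \<omega> \<longrightarrow> inres l \<and>
        (\<forall>x\<in>V. \<exists>y. ((\<lambda>t. scaleC (exp (- (l * of_real t))) (S t x)) has_integral y) {0..} \<and>
                   R l x = scaleC (l ^ p) y)))"

definition int_semigroup_r ::
  "('x::complex_banach \<Rightarrow> 'z::complex_banach) \<Rightarrow> ('x \<Rightarrow> 'z) \<Rightarrow> 'x set \<Rightarrow> complex \<Rightarrow> nat \<Rightarrow> (real \<Rightarrow> 'x \<Rightarrow> 'x) \<Rightarrow> bool" where
  "int_semigroup_r E A D \<mu> p S \<longleftrightarrow>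
     exp_bounded_laplace (Xran E A D \<mu> p) (in_resolvent E A D) (Rr E A D) p S \<and>
     (\<forall>x0 \<in> range ((Rr E A D \<mu>) ^^ p). \<exists>x. mild_solution E A D x0 x \<and>
         (\<forall>t\<ge>0. S t x0 = iter_int p x t))"

definition int_semigroup_l ::
  "('x::complex_banach \<Rightarrow> 'z::complex_banach) \<Rightarrow> ('x \<Rightarrow> 'z) \<Rightarrow> 'x set \<Rightarrow> complex \<Rightarrow> nat \<Rightarrow> (real \<Rightarrow> 'z \<Rightarrow> 'z) \<Rightarrow> bool" where
  "int_semigroup_l E A D \<mu> p S \<longleftrightarrow>
     exp_bounded_laplace (Zran E A D \<mu> p) (in_resolvent E A D) (Rl E A D) p S \<and>
     (\<forall>z0 \<in> range ((Rl E A D \<mu>) ^^ p). \<exists>z.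
         mild_solution (E \<circ> res_op E A D \<mu>) (A \<circ> res_op E A D \<mu>) UNIV z0 z \<and>
         (\<forall>t\<ge>0. S t z0 = iter_int p z t))"

end

theory Submission
  imports Defs
begin

text \<open>On the dense set \<open>ran R(\<mu>)\<^sup>p\<close> the orbit \<open>t \<mapsto> S(t) x\<^sub>0\<close> is a \<open>p\<close>-fold integral of a
  continuous mild solution, hence continuous. The exponential bound makes the operators \<open>S(t)\<close>
  uniformly Lipschitz for \<open>t\<close> in compact intervals, so for \<open>y\<^sub>n \<longrightarrow> x\<^sub>0\<close> the orbits of \<open>y\<^sub>n\<close>
  converge locally uniformly to the orbit of \<open>x\<^sub>0\<close>, which is therefore continuous as well.\<close>

lemma continuous_on_atLeast_if_atLeastAtMost:
  fixes f :: "real \<Rightarrow> 'a::topological_space"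
  assumes "\<And>b. continuous_on {a..b} f"
  shows "continuous_on {a..} f"
  unfolding continuous_on_eq_continuous_within
proof
  fix t assume t: "t \<in> {a..}"
  have "at t within {a..} = at t within {a..t+1}"
    by (rule at_within_nhd[where S = "{..<t+1}"]) auto
  moreover have "continuous (at t within {a..t+1}) f"
    using assms[of "t+1"] t by (simp add: continuous_on_eq_continuous_within)
  ultimately show "continuous (at t within {a..}) f" by simp
qed

lemma continuous_on_integral_atLeast:
  fixes f :: "real \<Rightarrow> 'a::banach"
  assumes "continuous_on {a..} f"
  shows "continuous_on {a..} (\<lambda>t. integral {a..t} f)"
proof (rule continuous_on_atLeast_if_atLeastAtMost)
  fix b
  have "f integrable_on {a..b}"
    using assms by (intro integrable_continuous_real) (rule continuous_on_subset, auto)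
  then show "continuous_on {a..b} (\<lambda>t. integral {a..t} f)"
    by (rule indefinite_integral_continuous_1)
qed

lemma continuous_on_iter_int:
  fixes f :: "real \<Rightarrow> 'a::banach"
  assumes "continuous_on {0..} f"
  shows "continuous_on {0..} (iter_int n f)"
  by (induction n) (simp_all add: assms continuous_on_integral_atLeast)

lemma linear_funpow:
  fixes L :: "'a::real_vector \<Rightarrow> 'a"
  assumes "linear L"
  shows "linear (L ^^ n)"
proof (induction n)
  case 0
  then show ?case by (simp add: linear_id[unfolded id_def])
next
  case (Suc n)
  then show ?case using linear_compose[OF Suc assms] by (simp add: o_def)
qed

lemma subspace_closure:
  fixes S :: "'a::real_normed_vector set"
  assumes S: "subspace S"
  shows "subspace (closure S)"
  unfolding subspace_def
proof (intro conjI ballI allI)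
  show "0 \<in> closure S"
    using S closure_subset subspace_0 by blast
next
  fix x y assume "x \<in> closure S" "y \<in> closure S"
  then have "(x, y) \<in> closure (S \<times> S)"
    by (simp add: closure_Times)
  moreover have "(\<lambda>(u, v). u + v) ` closure (S \<times> S) \<subseteq> closure S"
    by (rule image_closure_subset)
      (auto intro!: continuous_intros closure_subset[THEN subsetD] subspace_add[OF S]
        simp: split_beta)
  ultimately show "x + y \<in> closure S" by force
next
  fix c :: real and x assume "x \<in> closure S"
  moreover have "(\<lambda>u. c *\<^sub>R u) ` closure S \<subseteq> closure S"
    by (rule image_closure_subset)
      (auto intro!: continuous_intros closure_subset[THEN subsetD] subspace_scale[OF S])
  ultimately show "c *\<^sub>R x \<in> closure S" by blast
qed

lemma continuous_on_closure_if_lipschitz: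
  fixes S :: "real \<Rightarrow> 'a::metric_space \<Rightarrow> 'b::metric_space" and K :: "real \<Rightarrow> real"
  assumes lipschitz: "\<And>t x y. t \<ge> 0 \<Longrightarrow> x \<in> V \<Longrightarrow> y \<in> V \<Longrightarrow> dist (S t x) (S t y) \<le> K t * dist x y"
    and K: "continuous_on {0..} K"
    and dense: "\<And>y. y \<in> W \<Longrightarrow> continuous_on {0..} (\<lambda>t. S t y)"
    and "W \<subseteq> V" and "x \<in> V" and "x \<in> closure W"
  shows "continuous_on {0..} (\<lambda>t. S t x)"
proof (rule continuous_on_atLeast_if_atLeastAtMost)
  fix b
  obtain y where y: "\<And>n. y n \<in> W" and "y \<longlonglongrightarrow> x"
    using \<open>x \<in> closure W\<close> unfolding closure_sequential by blast
  have "bounded (K ` {0..b})"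
    by (intro compact_imp_bounded compact_continuous_image continuous_on_subset[OF K]) auto
  then obtain M where M: "M > 0" "\<And>t. t \<in> {0..b} \<Longrightarrow> \<bar>K t\<bar> \<le> M"
    unfolding bounded_pos by auto
  have "uniform_limit {0..b} (\<lambda>n t. S t (y n)) (\<lambda>t. S t x) sequentially"
  proof (rule uniform_limitI)
    fix e :: real assume "e > 0"
    with M \<open>y \<longlonglongrightarrow> x\<close> have "\<forall>\<^sub>F n in sequentially. dist (y n) x < e / M"
      by (intro tendstoD) auto
    then show "\<forall>\<^sub>F n in sequentially. \<forall>t\<in>{0..b}. dist (S t (y n)) (S t x) < e"
    proof eventually_elim
      case (elim n)
      show ?case
      proof
        fix t assume t: "t \<in> {0..b}"
        have "y n \<in> V"
          using y \<open>W \<subseteq> V\<close> by blast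
        with t \<open>x \<in> V\<close> have "dist (S t (y n)) (S t x) \<le> K t * dist (y n) x"
          by (intro lipschitz) auto
        also have "\<dots> \<le> M * dist (y n) x"
          using M(2)[OF t] by (intro mult_right_mono) auto
        also have "\<dots> < e"
          using elim M(1) by (simp add: field_simps)
        finally show "dist (S t (y n)) (S t x) < e" .
      qed
    qed
  qed
  moreover have "\<forall>\<^sub>F n in sequentially. continuous_on {0..b} (\<lambda>t. S t (y n))"
    by (intro always_eventually allI continuous_on_subset[OF dense[OF y]]) auto
  ultimately show "continuous_on {0..b} (\<lambda>t. S t x)"
    by (intro uniform_limit_theorem) auto
qed

lemma exp_bounded_laplace_lipschitz:
  assumes "subspace V" and "exp_bounded_laplace V inres R p S"
  obtains C \<omega> where
    "\<And>t x y. t \<ge> 0 \<Longrightarrow> x \<in> V \<Longrightarrow> y \<in> V \<Longrightarrow> dist (S t x) (S t y) \<le> C * exp (\<omega> * t) * dist x y"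
proof -
  obtain C \<omega> where S: "\<And>t. t \<ge> 0 \<Longrightarrow> clinear_on V (S t) \<and>
      (\<forall>x\<in>V. norm (S t x) \<le> C * exp (\<omega> * t) * norm x)"
    using assms(2) unfolding exp_bounded_laplace_def by blast
  have "dist (S t x) (S t y) \<le> C * exp (\<omega> * t) * dist x y"
    if "t \<ge> 0" "x \<in> V" "y \<in> V" for t x y
  proof -
    have xy: "x - y \<in> V"
      by (rule subspace_diff[OF assms(1) that(2,3)])
    have "S t x = S t ((x - y) + y)" by simp
    also have "\<dots> = S t (x - y) + S t y"
      using S[OF \<open>t \<ge> 0\<close>] xy \<open>y \<in> V\<close> unfolding clinear_on_def by blast
    finally show ?thesis
      using S[OF \<open>t \<ge> 0\<close>] xy by (simp add: dist_norm)
  qed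
  then show thesis by (rule that)
qed

lemma exp_bounded_laplace_continuous_on_closure:
  assumes W: "subspace W" and S: "exp_bounded_laplace (closure W) inres R p S"
    and dense: "\<And>y. y \<in> W \<Longrightarrow> continuous_on {0..} (\<lambda>t. S t y)"
    and x: "x \<in> closure W"
  shows "continuous_on {0..} (\<lambda>t. S t x)"
proof -
  obtain C \<omega> where "\<And>t x y. t \<ge> 0 \<Longrightarrow> x \<in> closure W \<Longrightarrow> y \<in> closure W \<Longrightarrow>
      dist (S t x) (S t y) \<le> C * exp (\<omega> * t) * dist x y"
    using exp_bounded_laplace_lipschitz[OF subspace_closure[OF W] S] by blast
  then show ?thesis
    by (rule continuous_on_closure_if_lipschitz)
      (use x in \<open>auto intro!: continuous_intros dense closure_subset\<close>)
qed

lemma mild_solution_continuous_on_iter_int: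
  assumes "mild_solution E A D x0 x"
  shows "continuous_on {0..} (iter_int n x)"
  using assms unfolding mild_solution_def by (intro continuous_on_iter_int) simp

lemma int_semigroup_r_continuous_on_range:
  assumes "int_semigroup_r E A D \<mu> p S" and "y \<in> range (Rr E A D \<mu> ^^ p)"
  shows "continuous_on {0..} (\<lambda>t. S t y)"
proof -
  obtain x where "mild_solution E A D y x" and "\<forall>t\<ge>0. S t y = iter_int p x t"
    using assms unfolding int_semigroup_r_def by blast
  then show ?thesis
    by (auto intro: continuous_on_eq[OF mild_solution_continuous_on_iter_int])
qed

lemma int_semigroup_l_continuous_on_range:
  assumes "int_semigroup_l E A D \<mu> p S" and "z \<in> range (Rl E A D \<mu> ^^ p)"
  shows "continuous_on {0..} (\<lambda>t. S t z)"
proof -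
  obtain x where "mild_solution (E \<circ> res_op E A D \<mu>) (A \<circ> res_op E A D \<mu>) UNIV z x"
    and "\<forall>t\<ge>0. S t z = iter_int p x t"
    using assms unfolding int_semigroup_l_def by blast
  then show ?thesis
    by (auto intro: continuous_on_eq[OF mild_solution_continuous_on_iter_int])
qed

lemma
  assumes "standing_op E A D" and "in_resolvent E A D \<mu>"
  shows subspace_range_Rr_funpow: "subspace (range (Rr E A D \<mu> ^^ p))"
    and subspace_range_Rl_funpow: "subspace (range (Rl E A D \<mu> ^^ p))"
proof -
  have "linear E" "linear (res_op E A D \<mu>)"
    using assms unfolding standing_op_def in_resolvent_def res_op_def
    by (simp_all add: bounded_linear.linear)
  then have "linear (Rr E A D \<mu> ^^ p)" "linear (Rl E A D \<mu> ^^ p)"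
    unfolding Rr_def Rl_def by (simp_all add: linear_funpow linear_compose)
  then show "subspace (range (Rr E A D \<mu> ^^ p))" "subspace (range (Rl E A D \<mu> ^^ p))"
    by (simp_all add: linear_subspace_image)
qed

theorem lemma2p10:
  fixes E :: "'x::complex_banach \<Rightarrow> 'z::complex_banach"
    and A :: "'x \<Rightarrow> 'z" and D :: "'x set" and \<mu> :: complex
    and Sr :: "real \<Rightarrow> 'x \<Rightarrow> 'x" and Sl :: "real \<Rightarrow> 'z \<Rightarrow> 'z"
  assumes "standing_op E A D"
    and "has_res_index E A D"
    and "in_resolvent E A D \<mu>"
    and "int_semigroup_r E A D \<mu> (p_res E A D + 1) Sr"
    and "int_semigroup_l E A D \<mu> (p_res E A D + 1) Sl"
  shows "(\<forall>x0 \<in> Xran E A D \<mu> (p_res E A D + 1). continuous_on {0..} (\<lambda>t. Sr t x0)) \<and>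
         (\<forall>z0 \<in> Zran E A D \<mu> (p_res E A D + 1). continuous_on {0..} (\<lambda>t. Sl t z0))"
proof (intro conjI ballI)
  fix x0 assume x0: "x0 \<in> Xran E A D \<mu> (p_res E A D + 1)"
  have "exp_bounded_laplace (Xran E A D \<mu> (p_res E A D + 1)) (in_resolvent E A D) (Rr E A D)
      (p_res E A D + 1) Sr"
    using assms(4) unfolding int_semigroup_r_def by blast
  from exp_bounded_laplace_continuous_on_closure[OF subspace_range_Rr_funpow[OF assms(1,3)]
      this[unfolded Xran_def] int_semigroup_r_continuous_on_range[OF assms(4)] x0[unfolded Xran_def]]
  show "continuous_on {0..} (\<lambda>t. Sr t x0)" .
next
  fix z0 assume z0: "z0 \<in> Zran E A D \<mu> (p_res E A D + 1)"
  have "exp_bounded_laplace (Zran E A D \<mu> (p_res E A D + 1)) (in_resolvent E A D) (Rl E A D)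
      (p_res E A D + 1) Sl"
    using assms(5) unfolding int_semigroup_l_def by blast
  from exp_bounded_laplace_continuous_on_closure[OF subspace_range_Rl_funpow[OF assms(1,3)]
      this[unfolded Zran_def] int_semigroup_l_continuous_on_range[OF assms(5)] z0[unfolded Zran_def]]
  show "continuous_on {0..} (\<lambda>t. Sl t z0)" .
qed

end
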